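(* Let $G$ be a connected graph with $n\ge2$ nodes and diameter $D$, with nonnegative real loads of initial discrepancy $K>0$, and run Algorithm 1. For every $\beta>0$, after at most $(2nD+1)\ln(\lceil nK^2/\beta\rceil)$ rounds the potential $p(G)$ is at most $\beta$, and it remains at most $\beta$ in all subsequent rounds.
   Context: $G=(V,E)$ is an undirected connected graph, $n=|V|$, $D$ its diameter; each node $u$ holds a load $load(u)\ge 0$ (real). $L_{max},L_{min}$ denote the current maximum and minimum load, the discrepancy is $K=L_{max}-L_{min}$, $L_{avg}$ the average load (invariant under transfers), and the potential is $p(G)=\sum_{u\in V}(load(u)-L_{avg})^2$. Algorithm 1 (single proposal, continuous) proceeds in synchronous rounds; in each round, using the loads at the start of the round: (1) every node $u$ having at least one neighbor with strictly smaller load picks a neighbor $v$ maximizing $load(u)-load(v)$ (ties broken arbitrarily) and sends $v$ a proposal of value $p_{uv}=(load(u)-load(v))/2$; (2) every node that received at least one proposal accepts exactly one proposal of maximum value (ties arbitrary); (3) all accepted transfers are executed simultaneously (each accepted proposal $p_{wu}$ moves $p_{wu}$ from $w$ to $u$), and nodes report their new loads to neighbors. *)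

theory Defs
  imports Complex_Main
begin

text \<open>Graph: vertices = the finite type 'a, adjacency E (symmetric, irreflexive).
  Loads: a function 'a => real.\<close>

definition graph_dist :: "('a \<Rightarrow> 'a \<Rightarrow> bool) \<Rightarrow> 'a \<Rightarrow> 'a \<Rightarrow> nat" where
  "graph_dist E u v = (LEAST k. (E ^^ k) u v)"

definition diameter :: "('a::finite \<Rightarrow> 'a \<Rightarrow> bool) \<Rightarrow> nat" where
  "diameter E = Max {graph_dist E u v | u v. True}"

definition Lmax :: "('a::finite \<Rightarrow> real) \<Rightarrow> real" where
  "Lmax L = Max (range L)"

definition Lmin :: "('a::finite \<Rightarrow> real) \<Rightarrow> real" where
  "Lmin L = Min (range L)"

definition discrepancy :: "('a::finite \<Rightarrow> real) \<Rightarrow> real" where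
  "discrepancy L = Lmax L - Lmin L"

definition Lavg :: "('a::finite \<Rightarrow> real) \<Rightarrow> real" where
  "Lavg L = (\<Sum>u\<in>UNIV. L u) / real (card (UNIV :: 'a set))"

definition potential :: "('a::finite \<Rightarrow> real) \<Rightarrow> real" where
  "potential L = (\<Sum>u\<in>UNIV. (L u - Lavg L)^2)"

text \<open>Step (1): prop u = Some v means u proposes (L u - L v)/2 to v.\<close>
definition valid_proposals ::
  "('a \<Rightarrow> 'a \<Rightarrow> bool) \<Rightarrow> ('a \<Rightarrow> real) \<Rightarrow> ('a \<Rightarrow> 'a option) \<Rightarrow> bool" where
  "valid_proposals E L prop \<longleftrightarrow>
     (\<forall>u. case prop u of
            None \<Rightarrow> \<not> (\<exists>v. E u v \<and> L v < L u)
          | Some v \<Rightarrow> E u v \<and> L v < L u \<and> (\<forall>w. E u w \<longrightarrow> L u - L w \<le> L u - L v))"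

text \<open>Step (2): acc u = Some w means u accepts the proposal of w.\<close>
definition valid_accepts ::
  "('a \<Rightarrow> real) \<Rightarrow> ('a \<Rightarrow> 'a option) \<Rightarrow> ('a \<Rightarrow> 'a option) \<Rightarrow> bool" where
  "valid_accepts L prop acc \<longleftrightarrow>
     (\<forall>u. case acc u of
            None \<Rightarrow> \<not> (\<exists>w. prop w = Some u)
          | Some w \<Rightarrow> prop w = Some u \<and>
              (\<forall>w'. prop w' = Some u \<longrightarrow> (L w' - L u) / 2 \<le> (L w - L u) / 2))"

definition transfer_result ::
  "('a::finite \<Rightarrow> real) \<Rightarrow> ('a \<Rightarrow> 'a option) \<Rightarrow> 'a \<Rightarrow> real" where
  "transfer_result L acc u =
     L u + (case acc u of None \<Rightarrow> 0 | Some w \<Rightarrow> (L w - L u) / 2)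
         - (\<Sum>v\<in>{v. acc v = Some u}. (L u - L v) / 2)"

definition alg1_step ::
  "('a::finite \<Rightarrow> 'a \<Rightarrow> bool) \<Rightarrow> ('a \<Rightarrow> real) \<Rightarrow> ('a \<Rightarrow> real) \<Rightarrow> bool" where
  "alg1_step E L L' \<longleftrightarrow>
     (\<exists>prop acc. valid_proposals E L prop \<and> valid_accepts L prop acc \<and>
                 L' = transfer_result L acc)"

end

theory Submission
  imports Defs "HOL-Analysis.Convex"
begin

(* A round preserves the total load and lowers the potential by at least twice the sum of the
   squared accepted transfers.  To bound that sum from below, follow a shortest path from a
   node of maximal load to one of minimal load: the upper end x of every descending edge (x, y)
   proposes to some neighbour v, and v accepts a transfer of at least (L x - L y) / 2.  Path
   nodes sharing a neighbour are at most two apart, so each accepted transfer is charged at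
   most three times, and Cauchy-Schwarz along the path gives K^2 <= 12 D (sum of squared
   transfers).  With 4 p <= n K^2 this makes the potential contract by the factor
   1 - 2 / (3 n D) in every round, which yields the bound. *)

lemma valid_proposalsD:
  assumes "valid_proposals E L prop" and "prop u = Some v"
  shows "E u v" and "L v < L u" and "E u w \<Longrightarrow> L v \<le> L w"
  using assms unfolding valid_proposals_def by (force split: option.splits)+

lemma valid_proposals_NoneD:
  assumes "valid_proposals E L prop" and "prop u = None" and "E u v"
  shows "L u \<le> L v"
  using assms unfolding valid_proposals_def by (force split: option.splits)

lemma valid_acceptsD:
  assumes "valid_accepts L prop acc" and "acc v = Some w"
  shows "prop w = Some v" and "prop w' = Some v \<Longrightarrow> L w' \<le> L w"
  using assms unfolding valid_accepts_def by (force split: option.splits)+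

lemma valid_accepts_NoneD:
  assumes "valid_accepts L prop acc" and "acc v = None"
  shows "prop w \<noteq> Some v"
  using assms unfolding valid_accepts_def by (force split: option.splits)

lemma valid_accepts_unique_sender:
  assumes "valid_accepts L prop acc" and "acc v = Some u" and "acc v' = Some u"
  shows "v = v'"
  using valid_acceptsD(1)[OF assms(1,2)] valid_acceptsD(1)[OF assms(1,3)] by simp

definition received :: "('a \<Rightarrow> real) \<Rightarrow> ('a \<Rightarrow> 'a option) \<Rightarrow> 'a \<Rightarrow> real" where
  "received L acc v = (case acc v of None \<Rightarrow> 0 | Some w \<Rightarrow> (L w - L v) / 2)"

definition sent :: "('a \<Rightarrow> real) \<Rightarrow> ('a \<Rightarrow> 'a option) \<Rightarrow> 'a \<Rightarrow> real" where
  "sent L acc u = (\<Sum>v | acc v = Some u. received L acc v)"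

lemma received_nonneg:
  assumes "valid_proposals E L prop" and "valid_accepts L prop acc"
  shows "0 \<le> received L acc v"
proof (cases "acc v")
  case (Some w)
  then have "L v < L w" using valid_proposalsD(2)[OF assms(1) valid_acceptsD(1)[OF assms(2)]] by simp
  then show ?thesis using Some by (simp add: received_def)
qed (simp add: received_def)

lemma transfer_result_eq:
  "transfer_result L acc u = L u + received L acc u - sent L acc u"
  unfolding transfer_result_def received_def sent_def
  by (auto intro!: sum.cong split: option.splits)

lemma sum_accepted_swap:
  fixes g :: "'a::finite \<Rightarrow> 'a \<Rightarrow> 'b::comm_monoid_add"
  shows "(\<Sum>u\<in>UNIV. \<Sum>v | acc v = Some u. g u v)
       = (\<Sum>v\<in>UNIV. case acc v of None \<Rightarrow> 0 | Some u \<Rightarrow> g u v)"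
proof -
  have "(\<Sum>u\<in>UNIV. \<Sum>v | acc v = Some u. g u v)
      = (\<Sum>u\<in>UNIV. \<Sum>v\<in>UNIV. if acc v = Some u then g u v else 0)"
    by (simp add: sum.If_cases Int_def)
  also have "\<dots> = (\<Sum>v\<in>UNIV. \<Sum>u\<in>UNIV. if acc v = Some u then g u v else 0)"
    by (rule sum.swap)
  also have "\<dots> = (\<Sum>v\<in>UNIV. case acc v of None \<Rightarrow> 0 | Some u \<Rightarrow> g u v)"
    by (intro sum.cong) (auto split: option.split)
  finally show ?thesis .
qed

lemma sent_squared:
  assumes "valid_accepts L prop acc"
  shows "(sent L acc u)\<^sup>2 = (\<Sum>v | acc v = Some u. (received L acc v)\<^sup>2)"
proof (cases "\<exists>v. acc v = Some u")
  case True
  then obtain v where "acc v = Some u" by blast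
  then have "{v. acc v = Some u} = {v}" using valid_accepts_unique_sender[OF assms] by blast
  then show ?thesis by (simp add: sent_def)
qed (simp add: sent_def)

lemma sum_sent_weighted:
  fixes L :: "'a::finite \<Rightarrow> real"
  shows "(\<Sum>u\<in>UNIV. F u * sent L acc u)
       = (\<Sum>v\<in>UNIV. case acc v of None \<Rightarrow> 0 | Some u \<Rightarrow> F u * received L acc v)"
  unfolding sent_def sum_distrib_left by (rule sum_accepted_swap)

lemma sum_transfer_result:
  fixes L :: "'a::finite \<Rightarrow> real"
  shows "sum (transfer_result L acc) UNIV = sum L UNIV"
proof -
  have "(\<Sum>u\<in>UNIV. sent L acc u) = (\<Sum>v\<in>UNIV. received L acc v)"
    using sum_sent_weighted[of "\<lambda>_. 1" L acc]
    by (simp add: received_def split: option.split cong: option.case_cong)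
  then show ?thesis by (simp add: transfer_result_eq sum.distrib sum_subtractf)
qed

lemma sum_squares_transfer_result_le:
  fixes L :: "'a::finite \<Rightarrow> real"
  assumes vp: "valid_proposals E L prop" and va: "valid_accepts L prop acc"
  shows "(\<Sum>u\<in>UNIV. (transfer_result L acc u)\<^sup>2)
       \<le> (\<Sum>u\<in>UNIV. (L u)\<^sup>2) - 2 * (\<Sum>v\<in>UNIV. (received L acc v)\<^sup>2)"
proof -
  let ?r = "received L acc" and ?s = "sent L acc"
  have s_nonneg: "0 \<le> ?s u" for u
    unfolding sent_def by (intro sum_nonneg received_nonneg[OF vp va])
  have sum_s_sq: "(\<Sum>u\<in>UNIV. (?s u)\<^sup>2) = (\<Sum>v\<in>UNIV. (?r v)\<^sup>2)"
    unfolding sent_squared[OF va] sum_accepted_swap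
    by (intro sum.cong) (auto simp: received_def split: option.split)
  \<comment> \<open>each accepted transfer from \<open>w\<close> to \<open>v\<close> contributes \<open>L v - L w = -2 * received L acc v\<close>\<close>
  have cross: "(\<Sum>u\<in>UNIV. L u * ?r u) - (\<Sum>u\<in>UNIV. L u * ?s u) = - 2 * (\<Sum>v\<in>UNIV. (?r v)\<^sup>2)"
    unfolding sum_sent_weighted sum_subtractf[symmetric] sum_distrib_left
    by (intro sum.cong) (auto simp: received_def power2_eq_square field_simps split: option.split)
  have "(\<Sum>u\<in>UNIV. (transfer_result L acc u)\<^sup>2)
      \<le> (\<Sum>u\<in>UNIV. (L u)\<^sup>2 + 2 * (L u * ?r u) - 2 * (L u * ?s u) + (?r u)\<^sup>2 + (?s u)\<^sup>2)"
    unfolding transfer_result_eq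
  proof (rule sum_mono)
    fix u
    have "0 \<le> ?r u * ?s u" using received_nonneg[OF vp va] s_nonneg by simp
    then show "(L u + ?r u - ?s u)\<^sup>2 \<le> (L u)\<^sup>2 + 2 * (L u * ?r u) - 2 * (L u * ?s u) + (?r u)\<^sup>2 + (?s u)\<^sup>2"
      by (simp add: power2_eq_square algebra_simps)
  qed
  also have "\<dots> = (\<Sum>u\<in>UNIV. (L u)\<^sup>2) + 2 * ((\<Sum>u\<in>UNIV. L u * ?r u) - (\<Sum>u\<in>UNIV. L u * ?s u))
       + (\<Sum>u\<in>UNIV. (?r u)\<^sup>2) + (\<Sum>u\<in>UNIV. (?s u)\<^sup>2)"
    by (simp add: sum.distrib sum_subtractf sum_distrib_left algebra_simps)
  also have "\<dots> = (\<Sum>u\<in>UNIV. (L u)\<^sup>2) - 2 * (\<Sum>v\<in>UNIV. (?r v)\<^sup>2)"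
    unfolding cross sum_s_sq by simp
  finally show ?thesis .
qed

lemma potential_eq_sum_squares:
  fixes X :: "'a::finite \<Rightarrow> real"
  shows "potential X = (\<Sum>u\<in>UNIV. (X u)\<^sup>2) - real (card (UNIV::'a set)) * (Lavg X)\<^sup>2"
proof -
  let ?n = "real (card (UNIV::'a set))"
  have "potential X = (\<Sum>u\<in>UNIV. (X u)\<^sup>2 - 2 * Lavg X * X u + (Lavg X)\<^sup>2)"
    unfolding potential_def by (intro sum.cong) (simp_all add: power2_diff)
  also have "\<dots> = (\<Sum>u\<in>UNIV. (X u)\<^sup>2) - 2 * Lavg X * (\<Sum>u\<in>UNIV. X u) + ?n * (Lavg X)\<^sup>2"
    by (simp add: sum.distrib sum_subtractf sum_distrib_left)
  also have "(\<Sum>u\<in>UNIV. X u) = ?n * Lavg X" by (simp add: Lavg_def)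
  finally show ?thesis by (simp add: power2_eq_square)
qed

lemma potential_transfer_result_le:
  fixes L :: "'a::finite \<Rightarrow> real"
  assumes "valid_proposals E L prop" and "valid_accepts L prop acc"
  shows "potential (transfer_result L acc) \<le> potential L - 2 * (\<Sum>v\<in>UNIV. (received L acc v)\<^sup>2)"
proof -
  have "Lavg (transfer_result L acc) = Lavg L" by (simp add: Lavg_def sum_transfer_result)
  then show ?thesis
    using sum_squares_transfer_result_le[OF assms] by (simp add: potential_eq_sum_squares)
qed

lemma potential_le_discrepancy:
  fixes L :: "'a::finite \<Rightarrow> real"
  shows "4 * potential L \<le> real (card (UNIV::'a set)) * (discrepancy L)\<^sup>2"
proof -
  let ?n = "real (card (UNIV::'a set))"
  define c where "c = (Lmax L + Lmin L) / 2"
  \<comment> \<open>the mean minimises the sum of squared deviations, so compare with the midrange \<open>c\<close>\<close>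
  have "(\<Sum>u\<in>UNIV. (L u - c)\<^sup>2)
      = (\<Sum>u\<in>UNIV. (L u - Lavg L)\<^sup>2 + 2 * (Lavg L - c) * (L u - Lavg L) + (Lavg L - c)\<^sup>2)"
    by (intro sum.cong) (simp_all add: power2_eq_square algebra_simps)
  also have "\<dots> = potential L + 2 * (Lavg L - c) * (\<Sum>u\<in>UNIV. L u - Lavg L) + ?n * (Lavg L - c)\<^sup>2"
    by (simp add: potential_def sum.distrib sum_distrib_left[symmetric])
  also have "(\<Sum>u\<in>UNIV. L u - Lavg L) = 0" by (simp add: sum_subtractf Lavg_def)
  finally have "(\<Sum>u\<in>UNIV. (L u - c)\<^sup>2) = potential L + ?n * (Lavg L - c)\<^sup>2" by simp
  then have "4 * potential L \<le> (\<Sum>u\<in>UNIV. 4 * (L u - c)\<^sup>2)"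
    by (simp add: sum_distrib_left[symmetric])
  also have "\<dots> \<le> (\<Sum>u\<in>(UNIV::'a set). (discrepancy L)\<^sup>2)"
  proof (rule sum_mono)
    fix u
    have "Lmin L \<le> L u" "L u \<le> Lmax L" by (simp_all add: Lmin_def Lmax_def)
    then have "\<bar>2 * (L u - c)\<bar> \<le> \<bar>discrepancy L\<bar>"
      unfolding c_def discrepancy_def by (simp add: abs_le_iff field_simps)
    then have "(2 * (L u - c))\<^sup>2 \<le> (discrepancy L)\<^sup>2" by (simp only: abs_le_square_iff)
    then show "4 * (L u - c)\<^sup>2 \<le> (discrepancy L)\<^sup>2" by (simp only: power_mult_distrib) simp
  qed
  finally show ?thesis by simp
qed

lemma graph_dist_le: "(E ^^ k) u v \<Longrightarrow> graph_dist E u v \<le> k"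
  unfolding graph_dist_def by (rule Least_le)

lemma graph_dist_relpowp:
  assumes "E\<^sup>*\<^sup>* u v"
  shows "(E ^^ graph_dist E u v) u v"
  unfolding graph_dist_def using rtranclp_imp_relpowp[OF assms] by (rule LeastI_ex)

lemma graph_dist_eq_0_iff:
  assumes "E\<^sup>*\<^sup>* u v"
  shows "graph_dist E u v = 0 \<longleftrightarrow> u = v"
  using graph_dist_relpowp[OF assms] graph_dist_le[where k = 0] by auto

lemma graph_dist_edge_le:
  assumes "E\<^sup>*\<^sup>* m x" and "E x y"
  shows "graph_dist E m y \<le> Suc (graph_dist E m x)"
  by (rule graph_dist_le[OF relpowp_Suc_I[OF graph_dist_relpowp[OF assms(1)] assms(2)]])

lemma graph_dist_common_neighbour:
  assumes sym: "\<And>u v. E u v \<Longrightarrow> E v u" and connected: "\<And>u v. E\<^sup>*\<^sup>* u v"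
    and "E x v" and "E y v"
  shows "graph_dist E m y \<le> graph_dist E m x + 2"
  using graph_dist_edge_le[OF connected \<open>E x v\<close>, of m]
    graph_dist_edge_le[OF connected sym[OF \<open>E y v\<close>], of m] by simp

lemma shortest_path_exists:
  assumes connected: "\<And>u v. E\<^sup>*\<^sup>* u v"
  shows "\<exists>f. f 0 = m \<and> f (graph_dist E m x) = x
           \<and> (\<forall>i < graph_dist E m x. E (f i) (f (Suc i)))
           \<and> (\<forall>i \<le> graph_dist E m x. graph_dist E m (f i) = i)"
proof -
  have "\<exists>f. f 0 = m \<and> f k = x \<and> (\<forall>i<k. E (f i) (f (Suc i))) \<and> (\<forall>i\<le>k. graph_dist E m (f i) = i)"
    if "graph_dist E m x = k" for k
  using that proof (induction k arbitrary: x)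
    case 0
    then show ?case by (intro exI[of _ "\<lambda>_. m"]) (simp add: graph_dist_eq_0_iff[OF connected])
  next
    case (Suc k)
    from graph_dist_relpowp[OF connected, of m x] Suc.prems
    obtain y where y: "(E ^^ k) m y" "E y x" by (auto elim: relpowp_Suc_E)
    have "graph_dist E m y = k"
      using graph_dist_le[OF y(1)] graph_dist_edge_le[OF connected y(2), of m] Suc.prems by simp
    with Suc.IH obtain f where "f 0 = m" "f k = y" "\<forall>i<k. E (f i) (f (Suc i))"
      "\<forall>i\<le>k. graph_dist E m (f i) = i" by blast
    with y(2) Suc.prems show ?case
      by (intro exI[of _ "f(Suc k := x)"]) (auto simp: less_Suc_eq le_Suc_eq)
  qed
  then show ?thesis by blast
qed

lemma graph_dist_le_diameter: "graph_dist E u v \<le> diameter (E :: 'a::finite \<Rightarrow> 'a \<Rightarrow> bool)"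
proof -
  have "{graph_dist E u v |u v. True} = (\<lambda>(u, v). graph_dist E u v) ` UNIV" by auto
  then have "finite {graph_dist E u v |u v. True}" by simp
  then show ?thesis unfolding diameter_def by (rule Max_ge) blast
qed

lemma diameter_pos:
  fixes E :: "'a::finite \<Rightarrow> 'a \<Rightarrow> bool"
  assumes "card (UNIV :: 'a set) \<ge> 2" and connected: "\<And>u v. E\<^sup>*\<^sup>* u v"
  shows "diameter E \<ge> 1"
proof -
  have "\<not> card (UNIV :: 'a set) \<le> Suc 0" using assms(1) by simp
  then obtain u v :: 'a where "u \<noteq> v" using card_le_Suc0_iff_eq[OF finite_UNIV] by blast
  then have "graph_dist E u v \<noteq> 0" by (simp add: graph_dist_eq_0_iff[OF connected])
  then show ?thesis using graph_dist_le_diameter[of E u v] by linarith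
qed

lemma sum_comp_le_mult_sum_if_inj_on_residues:
  fixes c :: "'b::finite \<Rightarrow> real" and r :: "nat \<Rightarrow> 'b"
  assumes "finite B" and "0 < p" and "\<And>v. 0 \<le> c v"
    and inj: "\<And>k. inj_on r {i \<in> B. i mod p = k}"
  shows "(\<Sum>i\<in>B. c (r i)) \<le> real p * (\<Sum>v\<in>UNIV. c v)"
proof -
  have "(\<Sum>i\<in>B. c (r i)) = (\<Sum>k<p. \<Sum>i\<in>{i \<in> B. i mod p = k}. c (r i))"
    using assms(1,2) by (intro sum.group[symmetric]) auto
  also have "\<dots> \<le> (\<Sum>k<p. \<Sum>v\<in>UNIV. c v)"
  proof (rule sum_mono)
    fix k
    have "(\<Sum>i\<in>{i \<in> B. i mod p = k}. c (r i)) = (\<Sum>v\<in>r ` {i \<in> B. i mod p = k}. c v)"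
      by (rule sum.reindex_cong[OF inj refl refl, symmetric])
    also have "\<dots> \<le> (\<Sum>v\<in>UNIV. c v)" by (rule sum_mono2) (simp_all add: assms(3))
    finally show "(\<Sum>i\<in>{i \<in> B. i mod p = k}. c (r i)) \<le> (\<Sum>v\<in>UNIV. c v)" .
  qed
  finally show ?thesis by simp
qed

lemma descending_edge_received:
  assumes vp: "valid_proposals E L prop" and va: "valid_accepts L prop acc"
    and "E x y" and "L y < L x"
  obtains v where "prop x = Some v" and "E x v" and "L x - L y \<le> 2 * received L acc v"
proof -
  obtain v where v: "prop x = Some v"
    using valid_proposals_NoneD[OF vp _ \<open>E x y\<close>] \<open>L y < L x\<close> by fastforce
  obtain w where w: "acc v = Some w"
    using valid_accepts_NoneD[OF va _, of v x] v by fastforce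
  have "L v \<le> L y" by (rule valid_proposalsD(3)[OF vp v \<open>E x y\<close>])
  moreover have "L x \<le> L w" by (rule valid_acceptsD(2)[OF va w v])
  ultimately show thesis
    using that[OF v valid_proposalsD(1)[OF vp v]] w by (simp add: received_def)
qed

lemma sum_squared_descents_le:
  fixes L :: "'a::finite \<Rightarrow> real"
  assumes sym: "\<And>u v. E u v \<Longrightarrow> E v u" and connected: "\<And>u v. E\<^sup>*\<^sup>* u v"
    and vp: "valid_proposals E L prop" and va: "valid_accepts L prop acc"
    and path: "\<And>i. i < d \<Longrightarrow> E (f i) (f (Suc i))"
    and dist: "\<And>i. i \<le> d \<Longrightarrow> graph_dist E m (f i) = i"
  shows "(\<Sum>i\<in>{i. i < d \<and> L (f (Suc i)) < L (f i)}. (L (f i) - L (f (Suc i)))\<^sup>2)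
       \<le> 12 * (\<Sum>v\<in>UNIV. (received L acc v)\<^sup>2)"
proof -
  define B where "B = {i. i < d \<and> L (f (Suc i)) < L (f i)}"
  define r where "r i = the (prop (f i))" for i
  have r: "E (f i) (r i)" "L (f i) - L (f (Suc i)) \<le> 2 * received L acc (r i)" if "i \<in> B" for i
    using that by (auto simp: B_def r_def elim!: descending_edge_received[OF vp va path])
  have "inj_on r {i \<in> B. i mod 3 = k}" for k
  proof (rule inj_onI)
    fix i j
    assume i: "i \<in> {i \<in> B. i mod 3 = k}" and j: "j \<in> {i \<in> B. i mod 3 = k}" and "r i = r j"
    then have "i \<in> B" "j \<in> B" "r i = r j" by simp_all
    then have "i \<le> d" "j \<le> d" "E (f i) (r i)" "E (f j) (r i)"
      using r(1)[of i] r(1)[of j] by (auto simp: B_def)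
    then have "j \<le> i + 2" "i \<le> j + 2"
      using graph_dist_common_neighbour[OF sym connected, of "f i" "r i" "f j" m]
        graph_dist_common_neighbour[OF sym connected, of "f j" "r i" "f i" m] dist by simp_all
    moreover have "i mod 3 = j mod 3" using i j by simp
    ultimately show "i = j" by presburger
  qed
  then have "(\<Sum>i\<in>B. 4 * (received L acc (r i))\<^sup>2) \<le> real 3 * (\<Sum>v\<in>UNIV. 4 * (received L acc v)\<^sup>2)"
    by (intro sum_comp_le_mult_sum_if_inj_on_residues) (simp_all add: B_def)
  moreover have "(\<Sum>i\<in>B. (L (f i) - L (f (Suc i)))\<^sup>2) \<le> (\<Sum>i\<in>B. 4 * (received L acc (r i))\<^sup>2)"
  proof (rule sum_mono)
    fix i assume "i \<in> B"
    then have "(L (f i) - L (f (Suc i)))\<^sup>2 \<le> (2 * received L acc (r i))\<^sup>2"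
      using r(2) by (intro power_mono) (simp_all add: B_def)
    then show "(L (f i) - L (f (Suc i)))\<^sup>2 \<le> 4 * (received L acc (r i))\<^sup>2"
      by (simp add: power_mult_distrib)
  qed
  ultimately show ?thesis unfolding B_def by (simp add: sum_distrib_left)
qed

lemma discrepancy_squared_le:
  fixes L :: "'a::finite \<Rightarrow> real"
  assumes sym: "\<And>u v. E u v \<Longrightarrow> E v u" and connected: "\<And>u v. E\<^sup>*\<^sup>* u v"
    and vp: "valid_proposals E L prop" and va: "valid_accepts L prop acc"
  shows "(discrepancy L)\<^sup>2 \<le> 12 * real (diameter E) * (\<Sum>v\<in>UNIV. (received L acc v)\<^sup>2)"
proof -
  have "Lmax L \<in> range L" "Lmin L \<in> range L"
    unfolding Lmax_def Lmin_def by (simp_all add: Max_in Min_in)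
  then obtain m s where m: "L m = Lmax L" and s: "L s = Lmin L" by (metis rangeE)
  define d where "d = graph_dist E m s"
  obtain f where "f 0 = m" "f d = s" and path: "\<And>i. i < d \<Longrightarrow> E (f i) (f (Suc i))"
    and dist: "\<And>i. i \<le> d \<Longrightarrow> graph_dist E m (f i) = i"
    using shortest_path_exists[OF connected, of m s] unfolding d_def by blast
  define g where "g i = L (f i) - L (f (Suc i))" for i
  define B where "B = {i. i < d \<and> L (f (Suc i)) < L (f i)}"
  have "discrepancy L = (\<Sum>i<d. g i)"
    using sum_lessThan_telescope'[of "\<lambda>i. L (f i)" d] \<open>f 0 = m\<close> \<open>f d = s\<close> m s
    by (simp add: g_def discrepancy_def)
  also have "\<dots> \<le> (\<Sum>i<d. if i \<in> B then g i else 0)"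
    by (intro sum_mono) (auto simp: B_def g_def)
  also have "\<dots> = (\<Sum>i\<in>B. g i)"
    by (simp add: sum.If_cases B_def Int_def)
  finally have K_le: "discrepancy L \<le> (\<Sum>i\<in>B. g i)" .
  have "0 \<le> discrepancy L"
    using Min_le[of "range L"] Max_ge[of "range L"] by (simp add: discrepancy_def Lmin_def Lmax_def)
  with K_le have "(discrepancy L)\<^sup>2 \<le> (\<Sum>i\<in>B. g i)\<^sup>2" by (simp add: power_mono)
  also have "\<dots> \<le> (\<Sum>i\<in>B. (g i)\<^sup>2) * card B" by (rule sum_squared_le_sum_of_squares)
  also have "\<dots> \<le> (12 * (\<Sum>v\<in>UNIV. (received L acc v)\<^sup>2)) * real (diameter E)"
  proof (rule mult_mono)
    show "(\<Sum>i\<in>B. (g i)\<^sup>2) \<le> 12 * (\<Sum>v\<in>UNIV. (received L acc v)\<^sup>2)"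
      unfolding B_def g_def by (rule sum_squared_descents_le[OF sym connected vp va path dist])
    have "card B \<le> d" using card_mono[of "{..<d}" B] by (auto simp: B_def)
    then show "real (card B) \<le> real (diameter E)"
      using graph_dist_le_diameter[of E m s] by (simp add: d_def)
  qed (simp_all add: sum_nonneg)
  finally show ?thesis by (simp only: ac_simps)
qed

lemma potential_alg1_step_le:
  fixes E :: "'a::finite \<Rightarrow> 'a \<Rightarrow> bool"
  assumes sym: "\<And>u v. E u v \<Longrightarrow> E v u" and connected: "\<And>u v. E\<^sup>*\<^sup>* u v"
    and n2: "card (UNIV :: 'a set) \<ge> 2" and step: "alg1_step E L L'"
  shows "potential L'
       \<le> (1 - 2 / (3 * real (card (UNIV :: 'a set)) * real (diameter E))) * potential L"
proof -
  define a where "a = 3 * real (card (UNIV :: 'a set)) * real (diameter E)"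
  obtain props acc where vp: "valid_proposals E L props" and va: "valid_accepts L props acc"
    and L': "L' = transfer_result L acc"
    using step unfolding alg1_step_def by blast
  let ?S = "\<Sum>v\<in>UNIV. (received L acc v)\<^sup>2"
  have "0 < a" using diameter_pos[OF n2 connected] n2 by (simp add: a_def)
  have "4 * potential L \<le> real (card (UNIV :: 'a set)) * (discrepancy L)\<^sup>2"
    by (rule potential_le_discrepancy)
  also have "\<dots> \<le> real (card (UNIV :: 'a set)) * (12 * real (diameter E) * ?S)"
    by (intro mult_left_mono discrepancy_squared_le[OF sym connected vp va] of_nat_0_le_iff)
  finally have "2 / a * potential L \<le> 2 * ?S" using \<open>0 < a\<close> by (simp add: a_def field_simps)
  then have "potential L' \<le> (1 - 2 / a) * potential L"
    using potential_transfer_result_le[OF vp va] by (simp add: L' algebra_simps)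
  then show ?thesis by (simp only: a_def)
qed

lemma le_power_mult_if_step_le:
  fixes f :: "nat \<Rightarrow> real"
  assumes "\<And>t. f (Suc t) \<le> q * f t" and "0 \<le> q"
  shows "f t \<le> q ^ t * f 0"
proof (induction t)
  case (Suc t)
  have "f (Suc t) \<le> q * f t" by (rule assms(1))
  also have "\<dots> \<le> q * (q ^ t * f 0)" using Suc assms(2) by (rule mult_left_mono)
  finally show ?case by (simp add: mult.assoc)
qed simp

lemma one_minus_power_le_inverse:
  fixes x C :: real
  assumes "0 \<le> x" and "x \<le> 1" and "0 < C" and "ln C \<le> real t * x"
  shows "(1 - x) ^ t \<le> 1 / C"
proof -
  have "(1 - x) ^ t \<le> exp (- x) ^ t"
    using exp_ge_add_one_self[of "- x"] assms(2) by (intro power_mono) simp_all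
  also have "\<dots> = exp (- (real t * x))" by (simp flip: exp_of_nat_mult)
  also have "\<dots> \<le> exp (- ln C)" using assms(4) by simp
  also have "\<dots> = 1 / C" using assms(3) by (simp add: exp_minus inverse_eq_divide)
  finally show ?thesis .
qed

theorem lemma3:
  fixes E :: "'a::finite \<Rightarrow> 'a \<Rightarrow> bool"
    and L :: "nat \<Rightarrow> 'a \<Rightarrow> real"
    and \<beta> :: real
  assumes sym: "\<And>u v. E u v \<Longrightarrow> E v u"
    and irrefl: "\<And>u. \<not> E u u"
    and connected: "\<And>u v. E\<^sup>*\<^sup>* u v"
    and n2: "card (UNIV :: 'a set) \<ge> 2"
    and nonneg: "\<And>u. L 0 u \<ge> 0"
    and Kpos: "discrepancy (L 0) > 0"
    and run: "\<And>t. alg1_step E (L t) (L (Suc t))"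
    and beta: "\<beta> > 0"
  shows "\<forall>t. real t \<ge> (2 * real (card (UNIV :: 'a set)) * real (diameter E) + 1)
                  * ln (real_of_int \<lceil>real (card (UNIV :: 'a set)) * (discrepancy (L 0))^2 / \<beta>\<rceil>)
             \<longrightarrow> potential (L t) \<le> \<beta>"
proof (intro allI impI)
  fix t :: nat
  let ?n = "real (card (UNIV :: 'a set))" and ?D = "real (diameter E)"
  let ?K = "discrepancy (L 0)"
  define x where "x = 2 / (3 * ?n * ?D)"
  define C where "C = real_of_int \<lceil>?n * ?K\<^sup>2 / \<beta>\<rceil>"
  assume t: "(2 * ?n * ?D + 1) * ln C \<le> real t"
  have "2 \<le> ?n * ?D" using n2 diameter_pos[OF n2 connected] mult_mono[of 2 ?n 1 ?D] by simp
  then have x: "0 \<le> x" "x \<le> 1" "1 / (2 * ?n * ?D + 1) \<le> x" by (simp_all add: x_def field_simps)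
  have "?n * ?K\<^sup>2 / \<beta> \<le> C" unfolding C_def by (rule le_of_int_ceiling)
  moreover have "0 < ?n * ?K\<^sup>2 / \<beta>" using Kpos beta n2 by simp
  ultimately have C: "0 < C" "?n * ?K\<^sup>2 \<le> C * \<beta>" using beta by (linarith, simp add: divide_le_eq)
  have "ln C \<le> real t * (1 / (2 * ?n * ?D + 1))"
    using t \<open>2 \<le> ?n * ?D\<close> by (simp add: field_simps)
  also have "\<dots> \<le> real t * x" using x(3) by (rule mult_left_mono) simp
  finally have "(1 - x) ^ t \<le> 1 / C" using x C by (intro one_minus_power_le_inverse)
  have "potential (L t) \<le> (1 - x) ^ t * potential (L 0)"
    using le_power_mult_if_step_le[of "\<lambda>t. potential (L t)"]
      potential_alg1_step_le[OF sym connected n2 run] x(1,2) unfolding x_def by simp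
  also have "\<dots> \<le> 1 / C * (C * \<beta> / 4)"
    using \<open>(1 - x) ^ t \<le> 1 / C\<close> potential_le_discrepancy[of "L 0"] C x(2)
    by (intro mult_mono) (simp_all add: potential_def sum_nonneg)
  finally show "potential (L t) \<le> \<beta>" using C beta by simp
qed

end
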